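(* Let $\rho_Z>0$, $p_Z\in\mathbb R$, $K_Z>0$, and set $p_{\infty,Z}=K_Z-p_Z$ and $c_Z=\sqrt{K_Z/\rho_Z}$. Define, for $p>-p_{\infty,Z}$, $$f^{\mathrm{exp}}_Z(p)=c_Z\log\Big(\frac{p+p_{\infty,Z}}{K_Z}\Big),\qquad f^{\mathrm{shock}}_Z(p)=\frac{p-p_Z}{\sqrt{\rho_Z(p+p_{\infty,Z})}}.$$ Then $f^{\mathrm{shock}}_Z(p)\ge f^{\mathrm{exp}}_Z(p)$ for all $p>p_Z$. *)

theory Defs
  imports Complex_Main
begin

definition p_inf :: "real \<Rightarrow> real \<Rightarrow> real" where
  "p_inf pZ KZ = KZ - pZ"

definition c_snd :: "real \<Rightarrow> real \<Rightarrow> real" where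
  "c_snd rhoZ KZ = sqrt (KZ / rhoZ)"

definition f_exp :: "real \<Rightarrow> real \<Rightarrow> real \<Rightarrow> real \<Rightarrow> real" where
  "f_exp rhoZ pZ KZ p = c_snd rhoZ KZ * ln ((p + p_inf pZ KZ) / KZ)"

definition f_shock :: "real \<Rightarrow> real \<Rightarrow> real \<Rightarrow> real \<Rightarrow> real" where
  "f_shock rhoZ pZ KZ p = (p - pZ) / sqrt (rhoZ * (p + p_inf pZ KZ))"

end

theory Submission
  imports Defs
begin

text \<open>Put \<open>x = (p + p_inf) / K\<close>. Then \<open>f_exp = c ln x\<close> and \<open>f_shock = c (x - 1) / sqrt x\<close>,
  and \<open>p > p_Z\<close> means \<open>x > 1\<close>. So the claim is \<open>ln x \<le> (x - 1) / sqrt x\<close> for \<open>x \<ge> 1\<close>;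
  with \<open>x = t\<^sup>2\<close> this reads \<open>2 ln t \<le> t - 1 / t\<close>, an equality at \<open>t = 1\<close>, and the
  difference of the two sides has derivative \<open>(t - 1)\<^sup>2 / t\<^sup>2 \<ge> 0\<close>.\<close>

lemma two_ln_le_diff_inverse:
  fixes t :: real
  assumes "1 \<le> t"
  shows "2 * ln t \<le> t - 1 / t"
proof -
  let ?g = "\<lambda>t::real. t - 1 / t - 2 * ln t"
  have "?g 1 \<le> ?g t"
  proof (rule DERIV_nonneg_imp_increasing_open[OF assms])
    show "continuous_on {1..t} ?g"
      by (intro continuous_intros) auto
  next
    fix s :: real
    assume s: "1 < s" "s < t"
    have "DERIV ?g s :> 1 + 1 / s\<^sup>2 - 2 * (1 / s)"
      using s by (auto intro!: derivative_eq_intros simp: power2_eq_square field_simps)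
    moreover have "1 + 1 / s\<^sup>2 - 2 * (1 / s) = (s - 1)\<^sup>2 / s\<^sup>2"
      using s by (simp add: field_simps power2_eq_square)
    ultimately show "\<exists>y. DERIV ?g s :> y \<and> 0 \<le> y"
      by auto
  qed
  then show ?thesis
    by simp
qed

lemma ln_le_diff_div_sqrt:
  fixes x :: real
  assumes "1 \<le> x"
  shows "ln x \<le> (x - 1) / sqrt x"
proof -
  define t where "t = sqrt x"
  have t: "1 \<le> t" "x = t\<^sup>2"
    using assms by (simp_all add: t_def)
  have "ln x = 2 * ln t"
    using t by (simp add: ln_realpow)
  also have "\<dots> \<le> t - 1 / t"
    using two_ln_le_diff_inverse[OF t(1)] .
  also have "\<dots> = (x - 1) / sqrt x"
    using t by (simp add: t_def[symmetric] field_simps power2_eq_square)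
  finally show ?thesis .
qed

lemma f_shock_eq:
  fixes rhoZ pZ KZ p :: real
  assumes "rhoZ > 0" and "KZ > 0"
  defines "x \<equiv> (p + p_inf pZ KZ) / KZ"
  shows "f_shock rhoZ pZ KZ p = c_snd rhoZ KZ * ((x - 1) / sqrt x)"
proof -
  have "p - pZ = KZ * (x - 1)"
    using assms(2) by (simp add: x_def p_inf_def field_simps)
  moreover have "sqrt (rhoZ * (p + p_inf pZ KZ)) = sqrt (rhoZ * KZ) * sqrt x"
    using assms(2) by (simp add: x_def real_sqrt_mult[symmetric])
  ultimately have "f_shock rhoZ pZ KZ p = KZ / sqrt (rhoZ * KZ) * ((x - 1) / sqrt x)"
    by (simp add: f_shock_def)
  also have "KZ / sqrt (rhoZ * KZ) = c_snd rhoZ KZ"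
    using assms
    by (simp add: c_snd_def real_sqrt_divide real_sqrt_mult field_simps)
  finally show ?thesis .
qed

theorem lemmaB1:
  fixes rhoZ pZ KZ p :: real
  assumes "rhoZ > 0" and "KZ > 0" and "p > pZ"
  shows "f_shock rhoZ pZ KZ p \<ge> f_exp rhoZ pZ KZ p"
proof -
  define x where "x = (p + p_inf pZ KZ) / KZ"
  have "1 \<le> x"
    using assms by (simp add: x_def p_inf_def field_simps)
  then have "c_snd rhoZ KZ * ln x \<le> c_snd rhoZ KZ * ((x - 1) / sqrt x)"
    using assms by (intro mult_left_mono ln_le_diff_div_sqrt) (simp_all add: c_snd_def)
  then show ?thesis
    using assms by (simp add: f_shock_eq f_exp_def x_def)
qed

end
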